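(* Let $n\ge3$. Suppose $\mathcal{CB}$ is a set of $\binom{n-1}{2}$ three-cycle graphs in $\mathbb G^n_A$, each of weight $1$, such that each member of $\mathcal{CB}$ contains an arc (unordered pair of vertices) that belongs to no other member of $\mathcal{CB}$. Then $\mathcal{CB}$ is a basis of $\mathbb C^n_A$, the orthogonal complement of $\mathbb{ST}^n_A$ in $\mathbb G^n_A$.
   Context: $\mathbb G^n_A$ is the space of complete weighted directed graphs without loops on vertices $V_1,\dots,V_n$ where arc $V_i\to V_j$ has weight $d_{i,j}$ with $d_{j,i}=-d_{i,j}$, identified with $\mathbb R^{\binom n2}$ via the entries $d_{i,j}$, $i<j$, with the standard inner product. $\mathbb{ST}^n_A$ is the $(n-1)$-dimensional subspace of strongly transitive graphs, i.e. those with $d_{i,j}+d_{j,k}=d_{i,k}$ for all distinct $i,j,k$. A three-cycle of weight $x$ on distinct vertices $V_a,V_b,V_c$ is the graph with $d_{a,b}=d_{b,c}=d_{c,a}=x$ (hence $d_{b,a}=d_{c,b}=d_{a,c}=-x$) and all other weights zero. *)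

theory Defs
  imports Complex_Main "HOL-Library.Function_Algebras"
begin

text \<open>A graph in G^n_A (vertices 0..n-1) is represented by its upper-triangular weights:
  a function d on pairs (i,j) with i<j<n, zero elsewhere.\<close>

definition pairs :: "nat \<Rightarrow> (nat \<times> nat) set" where
  "pairs n = {(i, j). i < j \<and> j < n}"

definition GA :: "nat \<Rightarrow> (nat \<times> nat \<Rightarrow> real) set" where
  "GA n = {d. \<forall>p. p \<notin> pairs n \<longrightarrow> d p = 0}"

definition wt :: "(nat \<times> nat \<Rightarrow> real) \<Rightarrow> nat \<Rightarrow> nat \<Rightarrow> real" where
  "wt d i j = (if i < j then d (i, j) else if j < i then - d (j, i) else 0)"

definition ginner :: "nat \<Rightarrow> (nat \<times> nat \<Rightarrow> real) \<Rightarrow> (nat \<times> nat \<Rightarrow> real) \<Rightarrow> real" where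
  "ginner n d e = (\<Sum>p\<in>pairs n. d p * e p)"

definition STA :: "nat \<Rightarrow> (nat \<times> nat \<Rightarrow> real) set" where
  "STA n = {d \<in> GA n. \<forall>i j k. i < n \<and> j < n \<and> k < n \<and> i \<noteq> j \<and> j \<noteq> k \<and> i \<noteq> k
              \<longrightarrow> wt d i j + wt d j k = wt d i k}"

definition CA :: "nat \<Rightarrow> (nat \<times> nat \<Rightarrow> real) set" where
  "CA n = {d \<in> GA n. \<forall>e \<in> STA n. ginner n d e = 0}"

definition three_cycle :: "nat \<Rightarrow> nat \<Rightarrow> nat \<Rightarrow> real \<Rightarrow> (nat \<times> nat \<Rightarrow> real)" where
  "three_cycle a b c x = (\<lambda>(i, j). if i < j then
      (if (i, j) \<in> {(a, b), (b, c), (c, a)} then x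
       else if (j, i) \<in> {(a, b), (b, c), (c, a)} then - x else 0)
    else 0)"

definition is_three_cycle :: "nat \<Rightarrow> real \<Rightarrow> (nat \<times> nat \<Rightarrow> real) \<Rightarrow> bool" where
  "is_three_cycle n x d \<longleftrightarrow> (\<exists>a b c. a < n \<and> b < n \<and> c < n \<and> a \<noteq> b \<and> b \<noteq> c \<and> a \<noteq> c
       \<and> d = three_cycle a b c x)"

definition arcs :: "nat \<Rightarrow> (nat \<times> nat \<Rightarrow> real) \<Rightarrow> nat set set" where
  "arcs n d = {{i, j} | i j. (i, j) \<in> pairs n \<and> d (i, j) \<noteq> 0}"

definition gscale :: "real \<Rightarrow> (nat \<times> nat \<Rightarrow> real) \<Rightarrow> (nat \<times> nat \<Rightarrow> real)" where
  "gscale c d = (\<lambda>p. c * d p)"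

definition is_basis_of :: "(nat \<times> nat \<Rightarrow> real) set \<Rightarrow> (nat \<times> nat \<Rightarrow> real) set \<Rightarrow> bool" where
  "is_basis_of B V \<longleftrightarrow> B \<subseteq> V \<and> \<not> module.dependent gscale B \<and> module.span gscale B = V"

end

theory Submission
  imports Defs
begin

text \<open>
  Each three-cycle is orthogonal to every strongly transitive graph, because its inner
  product with such a graph is the sum of potential differences around a closed triangle.
  A private arc of a member of \<open>CB\<close> is a coordinate on which only that member is nonzero,
  so \<open>CB\<close> is linearly independent.  Finally \<open>C\<^sup>n\<^sub>A\<close> has dimension at most \<open>(n-1) choose 2\<close>:
  a graph of \<open>C\<^sup>n\<^sub>A\<close> is determined by its arcs avoiding vertex \<open>0\<close>, since its weight on
  the arc \<open>0 \<rightarrow> j\<close> is its inner product with the strongly transitive graph of the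
  potential that is \<open>1\<close> at \<open>j\<close> and \<open>0\<close> elsewhere.  Hence the \<open>(n-1) choose 2\<close>
  independent members of \<open>CB\<close> span \<open>C\<^sup>n\<^sub>A\<close>.
\<close>

lemma module_gscale: "module gscale"
  by unfold_locales (auto simp: gscale_def fun_eq_iff algebra_simps)

interpretation M: module gscale
  by (rule module_gscale)

interpretation V: vector_space gscale
  using module_gscale by (simp add: module_iff_vector_space)

lemma sum_fun_apply: "(sum f A) x = (\<Sum>a\<in>A. f a x)" for f :: "'a \<Rightarrow> 'b \<Rightarrow> 'c::comm_monoid_add"
  by (induction A rule: infinite_finite_induct) auto

lemma (in vector_space) subset_span_if_independent_card_maximal:
  assumes "B \<subseteq> V" "independent B" "finite B"
    and maximal: "\<And>S. S \<subseteq> V \<Longrightarrow> independent S \<Longrightarrow> finite S \<and> card S \<le> card B"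
  shows "V \<subseteq> span B"
proof
  fix a assume "a \<in> V"
  show "a \<in> span B"
  proof (rule ccontr)
    assume "a \<notin> span B"
    then have "a \<notin> B" "independent (insert a B)"
      using assms(2) span_base independent_insertI by blast+
    then show False
      using maximal[of "insert a B"] \<open>a \<in> V\<close> assms(1,3) by auto
  qed
qed

definition unit_graph :: "nat \<times> nat \<Rightarrow> (nat \<times> nat \<Rightarrow> real)" where
  "unit_graph p = (\<lambda>q. if q = p then 1 else 0)"

lemma in_span_unit_graph_if_supported:
  assumes "finite P" "\<And>p. p \<notin> P \<Longrightarrow> d p = 0"
  shows "d \<in> M.span (unit_graph ` P)"
proof -
  have "d = (\<Sum>p\<in>P. gscale (d p) (unit_graph p))"
    using assms by (auto simp: fun_eq_iff sum_fun_apply gscale_def unit_graph_def if_distrib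
        cong: if_cong)
  also have "\<dots> \<in> M.span (unit_graph ` P)"
    by (intro M.span_sum M.span_scale M.span_base) auto
  finally show ?thesis .
qed

lemma independent_if_private_coordinates:
  assumes "finite B"
    and unique: "\<And>b. b \<in> B \<Longrightarrow> \<exists>p. b p \<noteq> 0 \<and> (\<forall>b'\<in>B. b' \<noteq> b \<longrightarrow> b' p = 0)"
  shows "\<not> M.dependent B"
proof
  assume "M.dependent B"
  then obtain u b where b: "b \<in> B" "u b \<noteq> 0" and combination: "(\<Sum>v\<in>B. gscale (u v) v) = 0"
    using M.dependent_finite[OF assms(1)] by blast
  obtain p where p: "b p \<noteq> 0" "\<forall>b'\<in>B. b' \<noteq> b \<longrightarrow> b' p = 0"
    using unique[OF b(1)] by blast
  have "0 = (\<Sum>v\<in>B. u v * v p)"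
    using fun_cong[OF combination, of p] by (simp add: sum_fun_apply gscale_def)
  also have "\<dots> = u b * b p + (\<Sum>v\<in>B - {b}. u v * v p)"
    by (rule sum.remove[OF assms(1) b(1)])
  also have "(\<Sum>v\<in>B - {b}. u v * v p) = 0"
    using p(2) by (intro sum.neutral) auto
  finally show False
    using b(2) p(1) by simp
qed

lemma finite_pairs: "finite (pairs n)"
  by (rule finite_subset[of _ "{..<n} \<times> {..<n}"]) (auto simp: pairs_def)

lemma card_pairs: "card (pairs n) = n choose 2"
proof (induction n)
  case 0
  then show ?case by (simp add: pairs_def)
next
  case (Suc n)
  have "pairs (Suc n) = pairs n \<union> (\<lambda>i. (i, n)) ` {..<n}"
    by (auto simp: pairs_def less_Suc_eq)
  moreover have "pairs n \<inter> (\<lambda>i. (i, n)) ` {..<n} = {}"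
    by (auto simp: pairs_def)
  moreover have "card ((\<lambda>i. (i, n)) ` {..<n}) = n"
    by (subst card_image) (auto simp: inj_on_def)
  ultimately show ?case
    using Suc finite_pairs by (simp add: card_Un_disjoint numeral_2_eq_2)
qed

definition pairs_avoiding_0 :: "nat \<Rightarrow> (nat \<times> nat) set" where
  "pairs_avoiding_0 n = {(i, j). 0 < i \<and> i < j \<and> j < n}"

lemma pairs_avoiding_0_eq_image: "pairs_avoiding_0 n = map_prod Suc Suc ` pairs (n - 1)"
proof -
  have "(i, j) \<in> map_prod Suc Suc ` pairs (n - 1)" if "0 < i" "i < j" "j < n" for i j
    using that by (intro image_eqI[of _ _ "(i - 1, j - 1)"]) (auto simp: pairs_def)
  then show ?thesis
    by (auto simp: pairs_avoiding_0_def pairs_def)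
qed

lemma finite_pairs_avoiding_0: "finite (pairs_avoiding_0 n)"
  by (simp add: pairs_avoiding_0_eq_image finite_pairs)

lemma card_pairs_avoiding_0: "card (pairs_avoiding_0 n) = (n - 1) choose 2"
proof -
  have "inj (map_prod Suc Suc)"
    by (simp add: prod.inj_map)
  then show ?thesis
    by (simp add: pairs_avoiding_0_eq_image card_image inj_on_subset card_pairs)
qed

lemma wt_swap: "wt d j i = - wt d i j"
  by (auto simp: wt_def)

lemma ginner_add: "ginner n (d + d') e = ginner n d e + ginner n d' e"
  by (simp add: ginner_def sum.distrib algebra_simps)

lemma ginner_gscale: "ginner n (gscale c d) e = c * ginner n d e"
  by (simp add: ginner_def gscale_def sum_distrib_left algebra_simps)

lemma subspace_CA: "M.subspace (CA n)"
  unfolding M.subspace_def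
proof (intro conjI ballI allI)
  show "0 \<in> CA n"
    by (simp add: CA_def GA_def ginner_def)
  show "d + d' \<in> CA n" if "d \<in> CA n" "d' \<in> CA n" for d d'
    using that by (simp add: CA_def GA_def ginner_add)
  show "gscale c d \<in> CA n" if "d \<in> CA n" for c d
    using that by (simp add: CA_def ginner_gscale) (simp add: GA_def gscale_def)
qed

definition unit_arc :: "nat \<Rightarrow> nat \<Rightarrow> (nat \<times> nat \<Rightarrow> real)" where
  "unit_arc x y = (\<lambda>(i, j). if i < j then
      (if (i, j) = (x, y) then 1 else if (j, i) = (x, y) then -1 else 0) else 0)"

lemma three_cycle_eq_sum_unit_arcs:
  assumes "a \<noteq> b" "b \<noteq> c" "a \<noteq> c"
  shows "three_cycle a b c 1 = unit_arc a b + unit_arc b c + unit_arc c a"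
  using assms by (auto simp: fun_eq_iff three_cycle_def unit_arc_def)

lemma ginner_unit_arc:
  assumes "x < n" "y < n" "x \<noteq> y"
  shows "ginner n (unit_arc x y) e = wt e x y"
proof -
  have "ginner n (unit_arc x y) e = (\<Sum>p\<in>pairs n. if p = (min x y, max x y) then wt e x y else 0)"
    unfolding ginner_def
  proof (rule sum.cong)
    fix p assume "p \<in> pairs n"
    then obtain i j where "p = (i, j)" "i < j"
      by (auto simp: pairs_def)
    then show "unit_arc x y p * e p = (if p = (min x y, max x y) then wt e x y else 0)"
      using assms by (cases "x < y") (auto simp: unit_arc_def wt_def min_def max_def)
  qed simp
  also have "\<dots> = wt e x y"
    by (subst sum.delta[OF finite_pairs]) (use assms in \<open>auto simp: pairs_def min_def max_def\<close>)
  finally show ?thesis .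
qed

lemma three_cycle_in_CA:
  assumes "is_three_cycle n 1 d"
  shows "d \<in> CA n"
proof -
  obtain a b c where abc: "a < n" "b < n" "c < n" "a \<noteq> b" "b \<noteq> c" "a \<noteq> c"
    and d: "d = three_cycle a b c 1"
    using assms by (auto simp: is_three_cycle_def)
  have "d \<in> GA n"
    using abc by (auto simp: d GA_def pairs_def three_cycle_def)
  moreover have "ginner n d e = 0" if "e \<in> STA n" for e
  proof -
    have "ginner n d e = wt e a b + wt e b c + wt e c a"
      using abc by (simp add: d three_cycle_eq_sum_unit_arcs ginner_add ginner_unit_arc)
    also have "\<dots> = 0"
      using that abc wt_swap[of e a c] by (auto simp: STA_def)
    finally show ?thesis .
  qed
  ultimately show ?thesis
    by (simp add: CA_def)
qed

text \<open>The strongly transitive graph with \<open>wt d i j = \<phi> j - \<phi> i\<close> for the indicator \<open>\<phi>\<close> of \<open>k\<close>.\<close>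

definition vertex_potential :: "nat \<Rightarrow> nat \<Rightarrow> (nat \<times> nat \<Rightarrow> real)" where
  "vertex_potential n k = (\<lambda>(i, j). if (i, j) \<in> pairs n then
      (if j = k then 1 else 0) - (if i = k then 1 else 0) else 0)"

lemma vertex_potential_in_STA: "vertex_potential n k \<in> STA n"
  by (auto simp: STA_def GA_def wt_def vertex_potential_def pairs_def)

definition forget_vertex_0 :: "(nat \<times> nat \<Rightarrow> real) \<Rightarrow> (nat \<times> nat \<Rightarrow> real)" where
  "forget_vertex_0 d = (\<lambda>(i, j). if i = 0 then 0 else d (i, j))"

lemma module_hom_forget_vertex_0: "module_hom gscale gscale forget_vertex_0"
  by (auto simp: module_hom_def module_hom_axioms_def forget_vertex_0_def gscale_def fun_eq_iff
      module_gscale)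

interpretation forget_vertex_0: module_hom gscale gscale forget_vertex_0
  by (rule module_hom_forget_vertex_0)

lemma CA_eq_0_if_forget_vertex_0_eq_0:
  assumes "d \<in> CA n" "forget_vertex_0 d = 0"
  shows "d = 0"
proof
  fix p :: "nat \<times> nat"
  have vanish: "d (i, j) = 0" if "i \<noteq> 0" for i j
    using fun_cong[OF assms(2), of "(i, j)"] that by (simp add: forget_vertex_0_def)
  have vanish_0: "d (0, j) = 0" if "0 < j" "j < n" for j
  proof -
    have "ginner n d (vertex_potential n j) = (\<Sum>q\<in>pairs n. if q = (0, j) then d (0, j) else 0)"
      unfolding ginner_def
    proof (rule sum.cong)
      fix q assume "q \<in> pairs n"
      then obtain a b where "q = (a, b)" "a < b" "b < n"
        by (auto simp: pairs_def)
      then show "d q * vertex_potential n j q = (if q = (0, j) then d (0, j) else 0)"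
        using that vanish[of a b] by (cases "a = 0") (auto simp: vertex_potential_def pairs_def)
    qed simp
    also have "\<dots> = d (0, j)"
      by (subst sum.delta[OF finite_pairs]) (use that in \<open>auto simp: pairs_def\<close>)
    finally show ?thesis
      using assms(1) vertex_potential_in_STA[of n j] by (simp add: CA_def)
  qed
  have vanish_outside: "d q = 0" if "q \<notin> pairs n" for q
    using assms(1) that unfolding CA_def GA_def by blast
  obtain i j where p: "p = (i, j)"
    by force
  consider "i \<noteq> 0" | "i = 0" "0 < j" "j < n" | "(i, j) \<notin> pairs n"
    by (auto simp: pairs_def)
  then show "d p = 0 p"
    by cases (simp_all add: p vanish vanish_0 vanish_outside)
qed

lemma inj_on_forget_vertex_0_CA: "inj_on forget_vertex_0 (CA n)"
proof (rule inj_onI)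
  fix d d' assume "d \<in> CA n" "d' \<in> CA n" "forget_vertex_0 d = forget_vertex_0 d'"
  then have "d - d' \<in> CA n" "forget_vertex_0 (d - d') = 0"
    by (simp_all add: M.subspace_diff[OF subspace_CA] forget_vertex_0.diff)
  then have "d - d' = 0"
    by (rule CA_eq_0_if_forget_vertex_0_eq_0)
  then show "d = d'"
    by simp
qed

lemma forget_vertex_0_in_span:
  assumes "d \<in> GA n"
  shows "forget_vertex_0 d \<in> M.span (unit_graph ` pairs_avoiding_0 n)"
proof (rule in_span_unit_graph_if_supported[OF finite_pairs_avoiding_0])
  fix p assume "p \<notin> pairs_avoiding_0 n"
  then show "forget_vertex_0 d p = 0"
    using assms by (cases p) (auto simp: forget_vertex_0_def GA_def pairs_def pairs_avoiding_0_def)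
qed

lemma independent_subset_CA_card_le:
  assumes "S \<subseteq> CA n" "\<not> M.dependent S"
  shows "finite S \<and> card S \<le> (n - 1) choose 2"
proof -
  have inj: "inj_on forget_vertex_0 (M.span S)"
    using inj_on_forget_vertex_0_CA M.span_minimal[OF assms(1) subspace_CA] by (rule inj_on_subset)
  then have inj_S: "inj_on forget_vertex_0 S"
    using M.span_superset by (rule inj_on_subset)
  have "finite (forget_vertex_0 ` S) \<and>
      card (forget_vertex_0 ` S) \<le> card (unit_graph ` pairs_avoiding_0 n)"
  proof (rule V.independent_span_bound)
    show "\<not> M.dependent (forget_vertex_0 ` S)"
      using assms(2) inj by (rule forget_vertex_0.independent_injective_image)
    show "forget_vertex_0 ` S \<subseteq> M.span (unit_graph ` pairs_avoiding_0 n)"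
      using assms(1) forget_vertex_0_in_span by (auto simp: CA_def)
  qed (simp add: finite_pairs_avoiding_0)
  moreover have "card (forget_vertex_0 ` S) = card S"
    using inj_S by (rule card_image)
  moreover have "card (unit_graph ` pairs_avoiding_0 n) \<le> (n - 1) choose 2"
    using card_image_le[OF finite_pairs_avoiding_0] by (simp add: card_pairs_avoiding_0)
  ultimately show ?thesis
    using finite_imageD[OF _ inj_S] by auto
qed

lemma private_coordinate_if_private_arc:
  assumes "\<forall>d \<in> CB. \<exists>e \<in> arcs n d. \<forall>d' \<in> CB. d' \<noteq> d \<longrightarrow> e \<notin> arcs n d'" "d \<in> CB"
  shows "\<exists>p. d p \<noteq> 0 \<and> (\<forall>d'\<in>CB. d' \<noteq> d \<longrightarrow> d' p = 0)"
proof -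
  obtain e where e: "e \<in> arcs n d" "\<forall>d'\<in>CB. d' \<noteq> d \<longrightarrow> e \<notin> arcs n d'"
    using assms by blast
  then obtain i j where ij: "e = {i, j}" "(i, j) \<in> pairs n" "d (i, j) \<noteq> 0"
    by (auto simp: arcs_def)
  have "d' (i, j) = 0" if "d' \<in> CB" "d' \<noteq> d" for d'
  proof (rule ccontr)
    assume "d' (i, j) \<noteq> 0"
    then have "e \<in> arcs n d'"
      using ij(1,2) by (auto simp: arcs_def)
    then show False
      using e(2) that by blast
  qed
  with ij(3) show ?thesis
    by blast
qed

theorem corollary2:
  fixes n :: nat and CB :: "(nat \<times> nat \<Rightarrow> real) set"
  assumes "n \<ge> 3"
    and "finite CB" and "card CB = (n - 1) choose 2"
    and "\<forall>d \<in> CB. is_three_cycle n 1 d"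
    and "\<forall>d \<in> CB. \<exists>e \<in> arcs n d. \<forall>d' \<in> CB. d' \<noteq> d \<longrightarrow> e \<notin> arcs n d'"
  shows "is_basis_of CB (CA n)"
proof -
  have sub: "CB \<subseteq> CA n"
    using assms(4) three_cycle_in_CA by blast
  have indep: "\<not> M.dependent CB"
    using assms(2) private_coordinate_if_private_arc[OF assms(5)]
    by (rule independent_if_private_coordinates)
  have "CA n \<subseteq> M.span CB"
    using sub indep assms(2)
  proof (rule V.subset_span_if_independent_card_maximal)
    show "finite S \<and> card S \<le> card CB" if "S \<subseteq> CA n" "\<not> M.dependent S" for S
      using independent_subset_CA_card_le[OF that] assms(3) by simp
  qed
  with M.span_minimal[OF sub subspace_CA] have "M.span CB = CA n"
    by (rule subset_antisym)
  with sub indep show ?thesis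
    by (simp add: is_basis_of_def)
qed

end
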